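(* Let $X_1,X_2,\dots$ be i.i.d. from an unknown law $P_0$ on $\mathbb{R}^p$. For a variational parameter $\phi$ in a parameter set $\Phi$, define the observable law $$P_\phi(x)=\iint P(x\mid z;\theta)\,\pi_Z(z)\,q_\phi(\theta)\,dz\,d\theta,$$ the profiled criterion $$m(x;\phi)=\sup_{z\in\mathbb{R}^{d_z}}\Big\{\mathbb{E}_{q_\phi(\theta)}[\log P(x\mid z;\theta)]+\log\pi_Z(z)\Big\},$$ the population objective $\widetilde{\mathcal{J}}(\phi)=\mathbb{E}_{P_0}[m(X;\phi)]-\mathrm{KL}(q_\phi\|\pi_\theta)$ and the empirical objective $\widetilde{\mathcal{J}}_N(\phi)=\frac1N\sum_{i=1}^N m(X_i;\phi)-\mathrm{KL}(q_\phi\|\pi_\theta)$. Let $\Phi^\star=\arg\max_{\phi\in\Phi}\widetilde{\mathcal{J}}(\phi)$, and assume all $\phi\in\Phi^\star$ induce the same observable law, denoted $P^\star$. Let $\Phi_1\subseteq\Phi_2\subseteq\cdots\subseteq\Phi$ be a sieve with $\bigcup_N\Phi_N$ dense in $\Phi$, and let $\hat\phi_N\in\Phi_N$ be the fitted parameter at sample size $N$, with algorithmic suboptimality $\delta_N^{\mathrm{alg}}=\sup_{\phi\in\Phi_N}\widetilde{\mathcal{J}}_N(\phi)-\widetilde{\mathcal{J}}_N(\hat\phi_N)$. Let $d$ be the bounded-Lipschitz distance $$d(P,Q)=\sup_{\|f\|_\infty\le1,\ \mathrm{Lip}(f)\le1}\Big|\int f\,dP-\int f\,dQ\Big|.$$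 Assume: (i) $\omega_N:=\sup_{\phi\in\Phi_N}|\widetilde{\mathcal{J}}_N(\phi)-\widetilde{\mathcal{J}}(\phi)|\to0$ in probability; (ii) $\delta_N^{\mathrm{alg}}\to0$ in probability; (iii) $r_N:=\sup_{\phi\in\Phi}\widetilde{\mathcal{J}}(\phi)-\sup_{\phi\in\Phi_N}\widetilde{\mathcal{J}}(\phi)\to0$; (iv) for every $\varepsilon>0$, $\Delta(\varepsilon):=\sup_{\phi\in\Phi}\widetilde{\mathcal{J}}(\phi)-\sup_{\phi:\,d(P_\phi,P^\star)\ge\varepsilon}\widetilde{\mathcal{J}}(\phi)>0$. Then $d(P_{\hat\phi_N},P^\star)\to0$ in probability. In particular, if the model is well specified, i.e. $P^\star=P_0$, then $d(P_{\hat\phi_N},P_0)\to0$ in probability.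
   Context: $\pi_Z$ is the standard Gaussian prior on $\mathbb{R}^{d_z}$; $\pi_\theta$ is a Gaussian prior on the parameters $\theta$ of a neural network that outputs a mean vector $\mu(z)$ and diagonal variances $\sigma_1^2(z),\dots,\sigma_p^2(z)$; $P(x\mid z;\theta)=\mathcal{N}(\mu(z),\mathrm{diag}(\sigma_1^2(z),\dots,\sigma_p^2(z)))$; $q_\phi(\theta)=\mathcal{N}(\theta\mid\mu_\phi,\mathrm{diag}(\sigma_\phi^2))$ is a Gaussian variational distribution with parameters $\phi=(\mu_\phi,\sigma_\phi^2)$. The sieve sets $\Phi_N$ restrict weight norms and spectral norms and enforce a floor and ceiling on the variances. *)

theory Defs
  imports "HOL-Probability.Probability"
begin

definition BL_dist :: "'x::metric_space measure \<Rightarrow> 'x measure \<Rightarrow> real" where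
  "BL_dist P Q =
     (SUP f \<in> {f :: 'x \<Rightarrow> real. (\<forall>x. \<bar>f x\<bar> \<le> 1) \<and> (\<forall>x y. \<bar>f x - f y\<bar> \<le> dist x y)}.
        \<bar>(\<integral>x. f x \<partial>P) - (\<integral>x. f x \<partial>Q)\<bar>)"

text \<open>Convergence to 0 in (outer) probability of an extended-real valued sequence of
  random quantities: for all eps, eta > 0, eventually the event Y_N > eps is covered by a
  measurable event of probability less than eta.  (Outer probability avoids measurability
  issues of suprema over uncountable parameter sets.)\<close>
definition tendsto_zero_in_outer_prob :: "'a measure \<Rightarrow> (nat \<Rightarrow> 'a \<Rightarrow> ereal) \<Rightarrow> bool" where
  "tendsto_zero_in_outer_prob M Y \<longleftrightarrow>
     (\<forall>\<epsilon>>0. \<forall>\<eta>>0. eventually (\<lambda>N. \<exists>A \<in> sets M.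
        {\<omega> \<in> space M. \<bar>Y N \<omega>\<bar> > ereal \<epsilon>} \<subseteq> A \<and> measure M A < \<eta>) sequentially)"

definition pop_obj :: "'x measure \<Rightarrow> ('x \<Rightarrow> 'phi \<Rightarrow> real) \<Rightarrow> ('phi \<Rightarrow> real) \<Rightarrow> 'phi \<Rightarrow> real" where
  "pop_obj P0 m KL \<phi> = (\<integral>x. m x \<phi> \<partial>P0) - KL \<phi>"

text \<open>Empirical objective  J_N(phi) = (1/N) sum_{i=1}^N m(X_i;phi) - KL;
  the sample X_1..X_N is represented as X 0, ..., X (N-1).\<close>
definition emp_obj :: "(nat \<Rightarrow> 'a \<Rightarrow> 'x) \<Rightarrow> ('x \<Rightarrow> 'phi \<Rightarrow> real) \<Rightarrow> ('phi \<Rightarrow> real)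
                       \<Rightarrow> nat \<Rightarrow> 'a \<Rightarrow> 'phi \<Rightarrow> real" where
  "emp_obj X m KL N \<omega> \<phi> = (\<Sum>i<N. m (X i \<omega>) \<phi>) / real N - KL \<phi>"

definition argmax_set :: "('phi \<Rightarrow> real) \<Rightarrow> 'phi set \<Rightarrow> 'phi set" where
  "argmax_set J \<Phi> = {\<phi> \<in> \<Phi>. \<forall>\<psi> \<in> \<Phi>. J \<psi> \<le> J \<phi>}"

end

theory Submission
  imports Defs
begin

text \<open>On the event where the uniform deviation between empirical and population objective and
  the optimisation error are both at most c, and once the sieve approximation gap is below c,
  the fitted parameter maximises the population objective over the whole parameter set up to 4c.
  Choosing 4c below the separation gap of condition (iv) at level \<open>\<epsilon>\<close> forces its observable law
  to lie within distance \<open>\<epsilon>\<close> of P*; a union bound over the two bad events concludes.\<close>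

lemma SUP_le_of_approx_maximizer:
  fixes J Jn :: "'phi \<Rightarrow> real"
  assumes p: "p \<in> \<Psi>"
    and unif: "(SUP \<phi> \<in> \<Psi>. ereal \<bar>Jn \<phi> - J \<phi>\<bar>) \<le> ereal c"
    and approx: "(SUP \<phi> \<in> \<Psi>. ereal (Jn \<phi>)) - ereal (Jn p) \<le> ereal c"
  shows "(SUP \<phi> \<in> \<Psi>. ereal (J \<phi>)) \<le> ereal (J p + 3 * c)"
proof -
  have dev: "\<bar>Jn \<phi> - J \<phi>\<bar> \<le> c" if "\<phi> \<in> \<Psi>" for \<phi>
    using order_trans[OF SUP_upper[OF that] unif] by simp
  obtain s where s: "(SUP \<phi> \<in> \<Psi>. ereal (Jn \<phi>)) = ereal s"
    using SUP_upper[OF p, of "\<lambda>\<phi>. ereal (Jn \<phi>)"] approx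
    by (cases "SUP \<phi> \<in> \<Psi>. ereal (Jn \<phi>)") auto
  have near_sup: "s - Jn p \<le> c" using approx s by simp
  have below_sup: "Jn \<phi> \<le> s" if "\<phi> \<in> \<Psi>" for \<phi>
    using SUP_upper[OF that, of "\<lambda>\<phi>. ereal (Jn \<phi>)"] s by simp
  have "J \<phi> \<le> J p + 3 * c" if "\<phi> \<in> \<Psi>" for \<phi>
    using dev[OF that] dev[OF p] below_sup[OF that] near_sup by (auto simp: abs_le_iff)
  then show ?thesis by (auto intro: SUP_least)
qed

lemma less_of_SUP_separation:
  fixes J D :: "'phi \<Rightarrow> real"
  assumes p: "p \<in> \<Phi>"
    and gap: "(SUP \<phi> \<in> \<Phi>. ereal (J \<phi>)) - (SUP \<phi> \<in> \<Psi>. ereal (J \<phi>)) < ereal c"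
    and near_max: "(SUP \<phi> \<in> \<Psi>. ereal (J \<phi>)) \<le> ereal (J p + 3 * c)"
    and sep: "ereal (4 * c) \<le> (SUP \<phi> \<in> \<Phi>. ereal (J \<phi>)) - (SUP \<phi> \<in> {\<phi> \<in> \<Phi>. \<epsilon> \<le> D \<phi>}. ereal (J \<phi>))"
  shows "D p < \<epsilon>"
proof (rule ccontr)
  assume "\<not> D p < \<epsilon>"
  then have "ereal (J p) \<le> (SUP \<phi> \<in> {\<phi> \<in> \<Phi>. \<epsilon> \<le> D \<phi>}. ereal (J \<phi>))"
    using p by (intro SUP_upper) auto
  then have "ereal (4 * c) \<le> (SUP \<phi> \<in> \<Phi>. ereal (J \<phi>)) - ereal (J p)"
    using sep by (meson ereal_minus_mono order_refl order_trans)
  moreover have "(SUP \<phi> \<in> \<Phi>. ereal (J \<phi>)) - ereal (J p + 3 * c) < ereal c"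
    using near_max gap by (meson ereal_minus_mono order_refl order_le_less_trans)
  ultimately show False
    by (cases "SUP \<phi> \<in> \<Phi>. ereal (J \<phi>)") auto
qed

lemma tendsto_zero_in_outer_prob_union_bound:
  assumes Y: "tendsto_zero_in_outer_prob M Y" and Z: "tendsto_zero_in_outer_prob M Z"
    and dom: "\<And>\<epsilon>. \<epsilon> > 0 \<Longrightarrow> \<exists>c>0. eventually (\<lambda>N. \<forall>\<omega> \<in> space M.
               \<bar>W N \<omega>\<bar> > ereal \<epsilon> \<longrightarrow> \<bar>Y N \<omega>\<bar> > ereal c \<or> \<bar>Z N \<omega>\<bar> > ereal c) sequentially"
  shows "tendsto_zero_in_outer_prob M W"
  unfolding tendsto_zero_in_outer_prob_def
proof (intro allI impI)
  fix \<epsilon> \<eta> :: real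
  assume "\<epsilon> > 0" "\<eta> > 0"
  then obtain c where "c > 0" and covered: "eventually (\<lambda>N. \<forall>\<omega> \<in> space M.
      \<bar>W N \<omega>\<bar> > ereal \<epsilon> \<longrightarrow> \<bar>Y N \<omega>\<bar> > ereal c \<or> \<bar>Z N \<omega>\<bar> > ereal c) sequentially"
    using dom by blast
  with Y Z \<open>\<eta> > 0\<close> have
    "eventually (\<lambda>N. \<exists>A \<in> sets M. {\<omega> \<in> space M. \<bar>Y N \<omega>\<bar> > ereal c} \<subseteq> A \<and> measure M A < \<eta>/2) sequentially"
    "eventually (\<lambda>N. \<exists>A \<in> sets M. {\<omega> \<in> space M. \<bar>Z N \<omega>\<bar> > ereal c} \<subseteq> A \<and> measure M A < \<eta>/2) sequentially"
    unfolding tendsto_zero_in_outer_prob_def by (meson half_gt_zero)+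
  with covered show "eventually (\<lambda>N. \<exists>A \<in> sets M.
      {\<omega> \<in> space M. \<bar>W N \<omega>\<bar> > ereal \<epsilon>} \<subseteq> A \<and> measure M A < \<eta>) sequentially"
  proof eventually_elim
    case (elim N)
    then obtain A B where "A \<in> sets M" "B \<in> sets M"
      and "{\<omega> \<in> space M. \<bar>Y N \<omega>\<bar> > ereal c} \<subseteq> A" "measure M A < \<eta>/2"
      and "{\<omega> \<in> space M. \<bar>Z N \<omega>\<bar> > ereal c} \<subseteq> B" "measure M B < \<eta>/2"
      by blast
    moreover from calculation have "measure M (A \<union> B) < \<eta>"
      using measure_Un_le[of A M B] by linarith
    ultimately show ?case using elim(1) by (intro bexI[of _ "A \<union> B"]) auto
  qed
qed

lemma sieve_approx_maximizer_consistent: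
  fixes J :: "'phi \<Rightarrow> real" and JN :: "nat \<Rightarrow> 'a \<Rightarrow> 'phi \<Rightarrow> real"
    and D :: "'phi \<Rightarrow> real" and ph :: "nat \<Rightarrow> 'a \<Rightarrow> 'phi"
  assumes sub: "\<And>N. \<Phi>N N \<subseteq> \<Phi>" and ph: "\<And>N \<omega>. ph N \<omega> \<in> \<Phi>N N"
    and D_nonneg: "\<And>\<phi>. \<phi> \<in> \<Phi> \<Longrightarrow> D \<phi> \<ge> 0"
    and unif: "tendsto_zero_in_outer_prob M (\<lambda>N \<omega>. SUP \<phi> \<in> \<Phi>N N. ereal \<bar>JN N \<omega> \<phi> - J \<phi>\<bar>)"
    and approx: "tendsto_zero_in_outer_prob M
              (\<lambda>N \<omega>. (SUP \<phi> \<in> \<Phi>N N. ereal (JN N \<omega> \<phi>)) - ereal (JN N \<omega> (ph N \<omega>)))"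
    and gap: "(\<lambda>N. (SUP \<phi> \<in> \<Phi>. ereal (J \<phi>)) - (SUP \<phi> \<in> \<Phi>N N. ereal (J \<phi>))) \<longlonglongrightarrow> 0"
    and sep: "\<And>\<epsilon>. \<epsilon> > 0 \<Longrightarrow>
              (SUP \<phi> \<in> \<Phi>. ereal (J \<phi>)) - (SUP \<phi> \<in> {\<phi> \<in> \<Phi>. D \<phi> \<ge> \<epsilon>}. ereal (J \<phi>)) > 0"
  shows "tendsto_zero_in_outer_prob M (\<lambda>N \<omega>. ereal (D (ph N \<omega>)))"
proof (rule tendsto_zero_in_outer_prob_union_bound[OF unif approx])
  fix \<epsilon> :: real
  assume "\<epsilon> > 0"
  then obtain d where "0 < ereal d"
    and d: "ereal d < (SUP \<phi> \<in> \<Phi>. ereal (J \<phi>)) - (SUP \<phi> \<in> {\<phi> \<in> \<Phi>. D \<phi> \<ge> \<epsilon>}. ereal (J \<phi>))"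
    using ereal_dense2[OF sep] by blast
  define c where "c = d / 4"
  have "c > 0" using \<open>0 < ereal d\<close> by (simp add: c_def)
  have eventually_gap: "eventually (\<lambda>N.
      (SUP \<phi> \<in> \<Phi>. ereal (J \<phi>)) - (SUP \<phi> \<in> \<Phi>N N. ereal (J \<phi>)) < ereal c) sequentially"
    using order_tendstoD(2)[OF gap] \<open>c > 0\<close> by simp
  show "\<exists>c>0. eventually (\<lambda>N. \<forall>\<omega> \<in> space M.
      \<bar>ereal (D (ph N \<omega>))\<bar> > ereal \<epsilon> \<longrightarrow>
        \<bar>SUP \<phi> \<in> \<Phi>N N. ereal \<bar>JN N \<omega> \<phi> - J \<phi>\<bar>\<bar> > ereal c \<or>
        \<bar>(SUP \<phi> \<in> \<Phi>N N. ereal (JN N \<omega> \<phi>)) - ereal (JN N \<omega> (ph N \<omega>))\<bar> > ereal c) sequentially"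
  proof (intro exI[of _ c] conjI \<open>c > 0\<close> eventually_mono[OF eventually_gap] ballI impI, rule ccontr)
    fix N \<omega>
    assume sieve_gap: "(SUP \<phi> \<in> \<Phi>. ereal (J \<phi>)) - (SUP \<phi> \<in> \<Phi>N N. ereal (J \<phi>)) < ereal c"
      and far: "\<bar>ereal (D (ph N \<omega>))\<bar> > ereal \<epsilon>"
      and good: "\<not> (\<bar>SUP \<phi> \<in> \<Phi>N N. ereal \<bar>JN N \<omega> \<phi> - J \<phi>\<bar>\<bar> > ereal c \<or>
                   \<bar>(SUP \<phi> \<in> \<Phi>N N. ereal (JN N \<omega> \<phi>)) - ereal (JN N \<omega> (ph N \<omega>))\<bar> > ereal c)"
    have "(SUP \<phi> \<in> \<Phi>N N. ereal (J \<phi>)) \<le> ereal (J (ph N \<omega>) + 3 * c)"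
    proof (rule SUP_le_of_approx_maximizer[OF ph, where Jn = "JN N \<omega>"])
      have "x \<le> ereal c" if "\<bar>x\<bar> \<le> ereal c" for x :: ereal
        using that by (cases x) auto
      then show "(SUP \<phi> \<in> \<Phi>N N. ereal \<bar>JN N \<omega> \<phi> - J \<phi>\<bar>) \<le> ereal c"
        and "(SUP \<phi> \<in> \<Phi>N N. ereal (JN N \<omega> \<phi>)) - ereal (JN N \<omega> (ph N \<omega>)) \<le> ereal c"
        using good by (simp_all add: not_less)
    qed
    then have "D (ph N \<omega>) < \<epsilon>"
      using d sieve_gap sub ph by (intro less_of_SUP_separation[where \<Psi> = "\<Phi>N N"]) (auto simp: c_def)
    moreover have "ph N \<omega> \<in> \<Phi>" using sub ph by blast
    ultimately show False using far D_nonneg by force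
  qed
qed

lemma abs_integral_le_1:
  fixes f :: "'x \<Rightarrow> real"
  assumes "prob_space P" and "\<And>x. \<bar>f x\<bar> \<le> 1"
  shows "\<bar>integral\<^sup>L P f\<bar> \<le> 1"
proof (cases "integrable P f")
  case True
  have "\<bar>integral\<^sup>L P f\<bar> \<le> integral\<^sup>L P (\<lambda>x. \<bar>f x\<bar>)"
    by (rule integral_abs_bound)
  also have "\<dots> \<le> integral\<^sup>L P (\<lambda>x. 1)"
    using True assms by (intro integral_mono) (auto simp: prob_space_def finite_measure.integrable_const)
  also have "\<dots> = 1"
    using assms(1) by (simp add: prob_space.prob_space)
  finally show ?thesis .
qed (simp add: not_integrable_integral_eq)

lemma BL_dist_nonneg:
  fixes P Q :: "'x::metric_space measure"
  assumes "prob_space P" "prob_space Q"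
  shows "BL_dist P Q \<ge> 0"
  unfolding BL_dist_def
proof (rule cSUP_upper2)
  show "(\<lambda>x. 0) \<in> {f :: 'x \<Rightarrow> real. (\<forall>x. \<bar>f x\<bar> \<le> 1) \<and> (\<forall>x y. \<bar>f x - f y\<bar> \<le> dist x y)}"
    by simp
  show "bdd_above ((\<lambda>f. \<bar>(\<integral>x. f x \<partial>P) - (\<integral>x. f x \<partial>Q)\<bar>) `
      {f :: 'x \<Rightarrow> real. (\<forall>x. \<bar>f x\<bar> \<le> 1) \<and> (\<forall>x y. \<bar>f x - f y\<bar> \<le> dist x y)})"
  proof (rule bdd_aboveI2)
    fix f :: "'x \<Rightarrow> real"
    assume "f \<in> {f. (\<forall>x. \<bar>f x\<bar> \<le> 1) \<and> (\<forall>x y. \<bar>f x - f y\<bar> \<le> dist x y)}"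
    then have "\<bar>integral\<^sup>L P f\<bar> \<le> 1" "\<bar>integral\<^sup>L Q f\<bar> \<le> 1"
      using abs_integral_le_1 assms by blast+
    then show "\<bar>(\<integral>x. f x \<partial>P) - (\<integral>x. f x \<partial>Q)\<bar> \<le> 2" by simp
  qed
qed simp

theorem theorem3:
  fixes M :: "'a measure"
    and X :: "nat \<Rightarrow> 'a \<Rightarrow> 'x::euclidean_space"
    and P0 :: "'x measure"
    and Pobs :: "'phi::topological_space \<Rightarrow> 'x measure"
    and m :: "'x \<Rightarrow> 'phi \<Rightarrow> real"
    and KL :: "'phi \<Rightarrow> real"
    and \<Phi> :: "'phi set"
    and \<Phi>N :: "nat \<Rightarrow> 'phi set"
    and phihat :: "nat \<Rightarrow> 'a \<Rightarrow> 'phi"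
    and Pstar :: "'x measure"
  assumes M: "prob_space M"
    and P0: "prob_space P0" "sets P0 = sets borel"
    and X_rv: "\<And>i. X i \<in> borel_measurable M"
    and X_indep: "prob_space.indep_vars M (\<lambda>_. borel) X UNIV"
    and X_law: "\<And>i. distr M borel (X i) = P0"
    and Pobs: "\<And>\<phi>. \<phi> \<in> \<Phi> \<Longrightarrow> prob_space (Pobs \<phi>) \<and> sets (Pobs \<phi>) = sets borel"
    and maxnonempty: "argmax_set (pop_obj P0 m KL) \<Phi> \<noteq> {}"
    and same_law: "\<And>\<phi>. \<phi> \<in> argmax_set (pop_obj P0 m KL) \<Phi> \<Longrightarrow> Pobs \<phi> = Pstar"
    and sieve_mono: "\<And>N. \<Phi>N N \<subseteq> \<Phi>N (Suc N)"
    and sieve_sub: "\<And>N. \<Phi>N N \<subseteq> \<Phi>"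
    and sieve_dense: "\<Phi> \<subseteq> closure (\<Union>N. \<Phi>N N)"
    and phihat_in: "\<And>N \<omega>. phihat N \<omega> \<in> \<Phi>N N"
    and i: "tendsto_zero_in_outer_prob M
              (\<lambda>N \<omega>. SUP \<phi> \<in> \<Phi>N N.
                 ereal \<bar>emp_obj X m KL N \<omega> \<phi> - pop_obj P0 m KL \<phi>\<bar>)"
    and ii: "tendsto_zero_in_outer_prob M
              (\<lambda>N \<omega>. (SUP \<phi> \<in> \<Phi>N N. ereal (emp_obj X m KL N \<omega> \<phi>))
                     - ereal (emp_obj X m KL N \<omega> (phihat N \<omega>)))"
    and iii: "(\<lambda>N. (SUP \<phi> \<in> \<Phi>. ereal (pop_obj P0 m KL \<phi>))
                  - (SUP \<phi> \<in> \<Phi>N N. ereal (pop_obj P0 m KL \<phi>))) \<longlonglongrightarrow> 0"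
    and iv: "\<And>\<epsilon>. \<epsilon> > 0 \<Longrightarrow>
              (SUP \<phi> \<in> \<Phi>. ereal (pop_obj P0 m KL \<phi>))
              - (SUP \<phi> \<in> {\<phi> \<in> \<Phi>. BL_dist (Pobs \<phi>) Pstar \<ge> \<epsilon>}. ereal (pop_obj P0 m KL \<phi>)) > 0"
  shows "tendsto_zero_in_outer_prob M (\<lambda>N \<omega>. ereal (BL_dist (Pobs (phihat N \<omega>)) Pstar))
         \<and> (Pstar = P0 \<longrightarrow>
            tendsto_zero_in_outer_prob M (\<lambda>N \<omega>. ereal (BL_dist (Pobs (phihat N \<omega>)) P0)))"
proof -
  obtain \<phi>0 where "\<phi>0 \<in> argmax_set (pop_obj P0 m KL) \<Phi>"
    using maxnonempty by blast
  then have "prob_space Pstar"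
    using same_law Pobs by (auto simp: argmax_set_def)
  then have "\<And>\<phi>. \<phi> \<in> \<Phi> \<Longrightarrow> BL_dist (Pobs \<phi>) Pstar \<ge> 0"
    using BL_dist_nonneg Pobs by blast
  then have "tendsto_zero_in_outer_prob M (\<lambda>N \<omega>. ereal (BL_dist (Pobs (phihat N \<omega>)) Pstar))"
    using sieve_approx_maximizer_consistent[OF sieve_sub phihat_in _ i ii iii iv] by blast
  then show ?thesis by auto
qed

end
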